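(* Let $\Gamma\in\mathcal S$ have $n>1$ vertices. Then no embedding $\varphi$ of $\Gamma$ into $\mathbb Z^n$ (as in the definition of $\mathcal S$) has an index of type (3); that is, there is no index $i$ such that exactly one vertex $v$ has nonzero coefficient at $E_i$ in $\varphi(v)$ and that coefficient equals $-2$.
   Context: A plumbing tree is a finite tree $\Gamma$ each of whose vertices $v$ carries an integer decoration $d(v)$. $\Gamma$ is minimal if no vertex has decoration $-1$. For $n\ge 1$ let $(\mathbb Z^n,Q_n)$ be the lattice with basis $E_1,\dots,E_n$ and $Q_n(E_i,E_j)=-\delta_{ij}$, and let $K=\sum_{i=1}^n E_i$. A plumbing tree $\Gamma$ on $n$ vertices is a symplectic plumbing tree if there is a map $\varphi$ (an embedding) from its vertex set to $\mathbb Z^n$ such that: for distinct vertices $v_1,v_2$, $Q_n(\varphi(v_1),\varphi(v_2))$ is $1$ if they are adjacent and $0$ otherwise; $Q_n(\varphi(v),\varphi(v))=d(v)$ for every $v$; and $Q_n(\varphi(v),K)+Q_n(\varphi(v),\varphi(v))=-2$ for every $v$. $\mathcal S$ is the set of minimal, connected symplectic plumbing trees. *)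

theory Defs
  imports Main
begin

text \<open>Vectors of Z^n are functions nat => int supported on {0..<n};
E_i corresponds to coordinate i (0-based).\<close>

definition is_cycle :: "('a \<Rightarrow> 'a \<Rightarrow> bool) \<Rightarrow> 'a list \<Rightarrow> bool" where
  "is_cycle E cs \<longleftrightarrow> length cs \<ge> 3 \<and> distinct cs \<and>
     (\<forall>i. i + 1 < length cs \<longrightarrow> E (cs ! i) (cs ! (i + 1))) \<and> E (last cs) (hd cs)"

definition is_tree :: "'a set \<Rightarrow> ('a \<Rightarrow> 'a \<Rightarrow> bool) \<Rightarrow> bool" where
  "is_tree V E \<longleftrightarrow> finite V \<and> V \<noteq> {} \<and>
     (\<forall>u v. E u v \<longrightarrow> u \<in> V \<and> v \<in> V) \<and>
     (\<forall>u v. E u v \<longrightarrow> E v u) \<and> (\<forall>v. \<not> E v v) \<and>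
     (\<forall>u\<in>V. \<forall>v\<in>V. E\<^sup>*\<^sup>* u v) \<and>
     \<not> (\<exists>cs. is_cycle E cs)"

definition Qn :: "nat \<Rightarrow> (nat \<Rightarrow> int) \<Rightarrow> (nat \<Rightarrow> int) \<Rightarrow> int" where
  "Qn n x y = - (\<Sum>i<n. x i * y i)"

definition Kn :: "nat \<Rightarrow> nat \<Rightarrow> int" where
  "Kn n = (\<lambda>i. if i < n then 1 else 0)"

definition symplectic_embedding ::
  "'a set \<Rightarrow> ('a \<Rightarrow> 'a \<Rightarrow> bool) \<Rightarrow> ('a \<Rightarrow> int) \<Rightarrow> nat \<Rightarrow> ('a \<Rightarrow> nat \<Rightarrow> int) \<Rightarrow> bool" where
  "symplectic_embedding V E d n \<phi> \<longleftrightarrow>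
     (\<forall>v\<in>V. \<forall>i. n \<le> i \<longrightarrow> \<phi> v i = 0) \<and>
     (\<forall>v1\<in>V. \<forall>v2\<in>V. v1 \<noteq> v2 \<longrightarrow> Qn n (\<phi> v1) (\<phi> v2) = (if E v1 v2 then 1 else 0)) \<and>
     (\<forall>v\<in>V. Qn n (\<phi> v) (\<phi> v) = d v) \<and>
     (\<forall>v\<in>V. Qn n (\<phi> v) (Kn n) + Qn n (\<phi> v) (\<phi> v) = -2)"

definition symplectic_plumbing_tree :: "'a set \<Rightarrow> ('a \<Rightarrow> 'a \<Rightarrow> bool) \<Rightarrow> ('a \<Rightarrow> int) \<Rightarrow> bool" where
  "symplectic_plumbing_tree V E d \<longleftrightarrow> is_tree V E \<and>
     (\<exists>\<phi>. symplectic_embedding V E d (card V) \<phi>)"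

definition minimal_tree :: "'a set \<Rightarrow> ('a \<Rightarrow> int) \<Rightarrow> bool" where
  "minimal_tree V d \<longleftrightarrow> (\<forall>v\<in>V. d v \<noteq> -1)"

definition in_S :: "'a set \<Rightarrow> ('a \<Rightarrow> 'a \<Rightarrow> bool) \<Rightarrow> ('a \<Rightarrow> int) \<Rightarrow> bool" where
  "in_S V E d \<longleftrightarrow> minimal_tree V d \<and> symplectic_plumbing_tree V E d"

end

theory Submission
  imports Defs "Jordan_Normal_Form.Determinant"
begin

text \<open>Replacing the entry \<open>-2\<close> of \<open>\<phi> v\<close> by \<open>0\<close> gives \<open>n\<close> vectors \<open>\<psi> u\<close> in the
  coordinate hyperplane \<open>E\<^sub>i\<^sup>\<bottom>\<close>, so they satisfy a nontrivial relation \<open>\<Sum> X\<^sub>u \<psi>\<^sub>u = 0\<close>.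
  Distinct \<open>\<psi> u\<close> have non-positive standard dot product, which forces \<open>|X|\<close> to be a
  relation as well. By adjunction and minimality every \<open>\<psi> u\<close> has non-positive coefficient
  sum, and \<open>\<psi> v\<close> has coefficient sum \<open>-|\<psi> v|\<^sup>2\<close>; so pairing the relation \<open>|X|\<close> with
  \<open>K\<close> kills the weight of \<open>v\<close>, as \<open>\<psi> v \<noteq> 0\<close> (it pairs with the vector of a neighbour).
  Adjacent vectors pair negatively, so vanishing weights propagate along the edges of the
  connected tree, and \<open>X = 0\<close>.\<close>

definition dot :: "nat \<Rightarrow> (nat \<Rightarrow> 'b::comm_semiring_1) \<Rightarrow> (nat \<Rightarrow> 'b) \<Rightarrow> 'b" where
  "dot n x y = (\<Sum>j<n. x j * y j)"

lemma Qn_eq_neg_dot: "Qn n x y = - dot n x y"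
  by (simp add: Qn_def dot_def)

lemma Qn_Kn: "Qn n x (Kn n) = - (\<Sum>j<n. x j)"
  by (simp add: Qn_def Kn_def)

lemma dot_commute: "dot n x y = dot n y x"
  by (simp add: dot_def mult.commute)

lemma dot_self_nonneg: "0 \<le> dot n x (x :: nat \<Rightarrow> 'b::linordered_idom)"
  by (simp add: dot_def sum_nonneg)

lemma dot_self_eq_0_iff: "dot n x x = 0 \<longleftrightarrow> (\<forall>j<n. x j = (0 :: 'b::linordered_idom))"
  by (auto simp: dot_def sum_nonneg_eq_0_iff)

lemma dot_upd_left: "y i = 0 \<Longrightarrow> dot n (x(i := c)) y = dot n x y"
  by (auto simp: dot_def intro: sum.cong)

lemma dot_upd_right: "x i = 0 \<Longrightarrow> dot n x (y(i := c)) = dot n x y"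
  by (auto simp: dot_def intro: sum.cong)

lemma dot_lin_comb_left:
  "dot n (\<lambda>j. \<Sum>u\<in>V. Y u * \<psi> u j) z = (\<Sum>u\<in>V. Y u * dot n (\<psi> u) z)"
  by (simp add: dot_def sum_distrib_left sum_distrib_right sum.swap[of _ V] mult_ac)

lemma dot_lin_comb_right:
  "dot n z (\<lambda>j. \<Sum>u\<in>V. Y u * \<psi> u j) = (\<Sum>u\<in>V. Y u * dot n z (\<psi> u))"
  by (simp add: dot_commute[of n z] dot_lin_comb_left)

lemma sum_lessThan_upd:
  fixes f :: "nat \<Rightarrow> 'b::ab_group_add"
  assumes "i < n"
  shows "(\<Sum>j<n. (f(i := c)) j) = (\<Sum>j<n. f j) - f i + c"
proof -
  have i: "i \<in> {..<n}" using assms by simp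
  have "(\<Sum>j<n. (f(i := c)) j) = c + (\<Sum>j\<in>{..<n} - {i}. (f(i := c)) j)"
    using sum.remove[OF finite_lessThan i, of "f(i := c)"] by simp
  also have "(\<Sum>j\<in>{..<n} - {i}. (f(i := c)) j) = (\<Sum>j\<in>{..<n} - {i}. f j)"
    by (rule sum.cong) auto
  finally show ?thesis using i by (simp add: sum_diff1)
qed

lemma dot_self_upd:
  "i < n \<Longrightarrow> dot n (x(i := c)) (x(i := c)) = dot n x x - x i * x i + (c * c :: 'b::comm_ring_1)"
  using sum_lessThan_upd[of i n "\<lambda>j. x j * x j" "c * c"]
  by (simp add: dot_def fun_upd_def if_distrib cong: if_cong)

lemma sum_nonpos_eq_0_iff:
  fixes f :: "'a \<Rightarrow> 'b::ordered_ab_group_add"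
  assumes "finite A" and "\<And>x. x \<in> A \<Longrightarrow> f x \<le> 0"
  shows "sum f A = 0 \<longleftrightarrow> (\<forall>x\<in>A. f x = 0)"
  using sum_nonneg_eq_0_iff[of A "\<lambda>x. - f x"] assms by (simp add: sum_negf)

lemma ex_nontrivial_relation_if_coordinate_vanishes:
  fixes \<psi> :: "'a \<Rightarrow> nat \<Rightarrow> 'b::idom"
  assumes fin: "finite V" and i: "i < card V" and vanish: "\<forall>u\<in>V. \<psi> u i = 0"
  shows "\<exists>X. (\<exists>u\<in>V. X u \<noteq> 0) \<and> (\<forall>j<card V. (\<Sum>u\<in>V. X u * \<psi> u j) = 0)"
proof -
  define n where "n = card V"
  obtain g where g: "bij_betw g V {0..<n}" using ex_bij_betw_finite_nat[OF fin] n_def by blast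
  define h where "h = inv_into V g"
  have h: "bij_betw h {0..<n} V" using g bij_betw_inv_into h_def by blast
  have gh: "\<And>k. k < n \<Longrightarrow> g (h k) = k" using g h_def bij_betw_inv_into_right by fastforce
  define A :: "'b mat" where
    "A = mat\<^sub>r n n (\<lambda>j. if j = i then 0\<^sub>v n else vec n (\<lambda>k. \<psi> (h k) j))"
  have A: "A \<in> carrier_mat n n" unfolding A_def by auto
  have "det A = 0" unfolding A_def
    by (rule det_row_0) (use i n_def in auto)
  then obtain x where x: "x \<in> carrier_vec n" "x \<noteq> 0\<^sub>v n" "A *\<^sub>v x = 0\<^sub>v n"
    using det_0_iff_vec_prod_zero[OF A] by blast
  have A_entry: "A $$ (j, k) = \<psi> (h k) j" if "j < n" "k < n" for j k
    using that vanish bij_betwE[OF h] unfolding A_def by auto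
  obtain k0 where k0: "k0 < n" "x $ k0 \<noteq> 0"
    using x(1,2) by (metis carrier_vecD eq_vecI index_zero_vec(1,2))
  define X where "X u = x $ (g u)" for u
  have "(\<Sum>u\<in>V. X u * \<psi> u j) = 0" if j: "j < n" for j
  proof -
    have "(\<Sum>u\<in>V. X u * \<psi> u j) = (\<Sum>k\<in>{0..<n}. X (h k) * \<psi> (h k) j)"
      by (rule sum.reindex_bij_betw[OF h, symmetric])
    also have "\<dots> = (\<Sum>k\<in>{0..<n}. A $$ (j, k) * x $ k)"
      by (rule sum.cong) (auto simp: A_entry j X_def gh)
    also have "\<dots> = (A *\<^sub>v x) $ j"
      using j A x(1) by (simp add: scalar_prod_def)
    finally show ?thesis using x(3) j by simp
  qed
  moreover have "h k0 \<in> V" "X (h k0) \<noteq> 0" using h k0 gh X_def bij_betwE by fastforce+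
  ultimately show ?thesis unfolding n_def by blast
qed

text \<open>For \<open>Y = |X|\<close> the cross terms of \<open>|\<Sum> Y\<^sub>u \<psi>\<^sub>u|\<^sup>2\<close> can only decrease, so it is
  bounded by \<open>|\<Sum> X\<^sub>u \<psi>\<^sub>u|\<^sup>2 = 0\<close>.\<close>

lemma relation_abs_if_pairings_nonpos:
  fixes \<psi> :: "'a \<Rightarrow> nat \<Rightarrow> 'b::linordered_idom"
  assumes fin: "finite V"
    and nonpos: "\<And>u w. u \<in> V \<Longrightarrow> w \<in> V \<Longrightarrow> u \<noteq> w \<Longrightarrow> dot n (\<psi> u) (\<psi> w) \<le> 0"
    and rel: "\<forall>j<n. (\<Sum>u\<in>V. X u * \<psi> u j) = 0"
  shows "\<forall>j<n. (\<Sum>u\<in>V. \<bar>X u\<bar> * \<psi> u j) = 0"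
proof -
  have expand: "dot n (\<lambda>j. \<Sum>u\<in>V. Y u * \<psi> u j) (\<lambda>j. \<Sum>u\<in>V. Y u * \<psi> u j)
      = (\<Sum>u\<in>V. \<Sum>w\<in>V. Y u * Y w * dot n (\<psi> u) (\<psi> w))" for Y
    by (simp add: dot_lin_comb_left dot_lin_comb_right sum_distrib_left mult_ac)
  let ?z = "\<lambda>j. \<Sum>u\<in>V. \<bar>X u\<bar> * \<psi> u j"
  have "dot n ?z ?z \<le> dot n (\<lambda>j. \<Sum>u\<in>V. X u * \<psi> u j) (\<lambda>j. \<Sum>u\<in>V. X u * \<psi> u j)"
    unfolding expand
  proof (intro sum_mono)
    fix u w assume u: "u \<in> V" and w: "w \<in> V"
    show "\<bar>X u\<bar> * \<bar>X w\<bar> * dot n (\<psi> u) (\<psi> w) \<le> X u * X w * dot n (\<psi> u) (\<psi> w)"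
    proof (cases "u = w")
      case False
      have "X u * X w \<le> \<bar>X u\<bar> * \<bar>X w\<bar>" by (metis abs_ge_self abs_mult)
      with nonpos[OF u w False] show ?thesis by (simp add: mult_right_mono_neg)
    qed (simp add: abs_mult_self_eq)
  qed
  also have "\<dots> = 0" using rel by (simp add: dot_def)
  finally have "dot n ?z ?z = 0" using dot_self_nonneg[of n ?z] by linarith
  then show ?thesis by (simp add: dot_self_eq_0_iff)
qed

lemma nonneg_relation_zero_propagates:
  fixes \<psi> :: "'a \<Rightarrow> nat \<Rightarrow> 'b::linordered_idom"
  assumes fin: "finite V" and Y: "\<forall>u\<in>V. 0 \<le> Y u"
    and rel: "\<forall>j<n. (\<Sum>u\<in>V. Y u * \<psi> u j) = 0"
    and nonpos: "\<And>u w. u \<in> V \<Longrightarrow> w \<in> V \<Longrightarrow> u \<noteq> w \<Longrightarrow> dot n (\<psi> u) (\<psi> w) \<le> 0"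
    and a: "a \<in> V" "Y a = 0" and b: "b \<in> V" "dot n (\<psi> a) (\<psi> b) < 0"
  shows "Y b = 0"
proof -
  have terms_nonpos: "Y w * dot n (\<psi> w) (\<psi> a) \<le> 0" if "w \<in> V" for w
    using a that Y nonpos[OF that a(1)] by (cases "w = a") (auto simp: mult_nonneg_nonpos)
  have "(\<Sum>w\<in>V. Y w * dot n (\<psi> w) (\<psi> a)) = dot n (\<lambda>j. \<Sum>u\<in>V. Y u * \<psi> u j) (\<psi> a)"
    by (rule dot_lin_comb_left[symmetric])
  also have "\<dots> = 0" using rel by (simp add: dot_def)
  finally have "(\<Sum>w\<in>V. Y w * dot n (\<psi> w) (\<psi> a)) = 0" .
  then have "Y b * dot n (\<psi> b) (\<psi> a) = 0"
    using sum_nonpos_eq_0_iff[OF fin, of "\<lambda>w. Y w * dot n (\<psi> w) (\<psi> a)"] terms_nonpos b(1)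
    by blast
  then show ?thesis using b(2) by (simp add: dot_commute)
qed

lemma nonneg_relation_vanishes:
  fixes \<psi> :: "'a \<Rightarrow> nat \<Rightarrow> 'b::linordered_idom"
  assumes fin: "finite V" and Y: "\<forall>u\<in>V. 0 \<le> Y u"
    and rel: "\<forall>j<n. (\<Sum>u\<in>V. Y u * \<psi> u j) = 0"
    and nonpos: "\<And>u w. u \<in> V \<Longrightarrow> w \<in> V \<Longrightarrow> u \<noteq> w \<Longrightarrow> dot n (\<psi> u) (\<psi> w) \<le> 0"
    and adj: "\<And>u w. E u w \<Longrightarrow> u \<in> V \<and> w \<in> V \<and> dot n (\<psi> u) (\<psi> w) < 0"
    and conn: "\<forall>a\<in>V. \<forall>b\<in>V. E\<^sup>*\<^sup>* a b"
    and sums_nonpos: "\<forall>u\<in>V. (\<Sum>j<n. \<psi> u j) \<le> 0"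
    and v: "v \<in> V" "(\<Sum>j<n. \<psi> v j) = - dot n (\<psi> v) (\<psi> v)" "\<exists>w\<in>V. w \<noteq> v"
  shows "\<forall>u\<in>V. Y u = 0"
proof -
  have "(\<Sum>u\<in>V. Y u * (\<Sum>j<n. \<psi> u j)) = dot n (\<lambda>j. \<Sum>u\<in>V. Y u * \<psi> u j) (\<lambda>_. 1)"
    unfolding dot_lin_comb_left by (simp add: dot_def)
  also have "\<dots> = 0" using rel by (simp add: dot_def)
  finally have "(\<Sum>u\<in>V. Y u * (\<Sum>j<n. \<psi> u j)) = 0" .
  moreover have "Y u * (\<Sum>j<n. \<psi> u j) \<le> 0" if "u \<in> V" for u
    using that Y sums_nonpos by (simp add: mult_nonneg_nonpos)
  ultimately have weighted_sums: "\<forall>u\<in>V. Y u * (\<Sum>j<n. \<psi> u j) = 0"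
    using sum_nonpos_eq_0_iff[OF fin, of "\<lambda>u. Y u * (\<Sum>j<n. \<psi> u j)"] by simp
  obtain w0 where "w0 \<in> V" "w0 \<noteq> v" using v(3) by blast
  then obtain w where "E v w"
    using conn v(1) by (metis converse_rtranclpE)
  have Yv: "Y v = 0"
  proof (rule ccontr)
    assume "Y v \<noteq> 0"
    with weighted_sums v(1) have "(\<Sum>j<n. \<psi> v j) = 0" by auto
    with v(2) have "dot n (\<psi> v) (\<psi> v) = 0" by simp
    then have "\<forall>j<n. \<psi> v j = 0" by (simp add: dot_self_eq_0_iff)
    then have "dot n (\<psi> v) (\<psi> w) = 0" by (simp add: dot_def)
    with adj[OF \<open>E v w\<close>] show False by simp
  qed
  have "Y u = 0" if "E\<^sup>*\<^sup>* v u" for u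
    using that
  proof (induction rule: rtranclp_induct)
    case (step a b)
    with adj[OF step(2)] show ?case
      using nonneg_relation_zero_propagates[OF fin Y rel nonpos, of a b] by simp
  qed (rule Yv)
  then show ?thesis using conn v(1) by blast
qed

lemma symplectic_embedding_dot:
  assumes "symplectic_embedding V E d n \<phi>" and "u \<in> V" "w \<in> V"
  shows "dot n (\<phi> u) (\<phi> w) = (if u = w then - d u else if E u w then -1 else 0)"
proof (cases "u = w")
  case True
  then show ?thesis using assms unfolding symplectic_embedding_def Qn_eq_neg_dot by force
next
  case False
  then have "Qn n (\<phi> u) (\<phi> w) = (if E u w then 1 else 0)"
    using assms unfolding symplectic_embedding_def by blast
  with False show ?thesis unfolding Qn_eq_neg_dot by (simp split: if_splits)
qed

lemma symplectic_embedding_coeff_sum: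
  assumes "symplectic_embedding V E d n \<phi>" and "u \<in> V"
  shows "(\<Sum>j<n. \<phi> u j) = 2 + d u"
  using assms unfolding symplectic_embedding_def Qn_Kn by force

text \<open>Minimality excludes \<open>|\<phi> u|\<^sup>2 = 1\<close> and adjunction excludes \<open>\<phi> u = 0\<close>.\<close>

lemma symplectic_embedding_coeff_sum_nonpos:
  assumes emb: "symplectic_embedding V E d n \<phi>" and u: "u \<in> V" "d u \<noteq> -1"
  shows "(\<Sum>j<n. \<phi> u j) \<le> 0"
proof -
  have norm: "dot n (\<phi> u) (\<phi> u) = - d u" using symplectic_embedding_dot[OF emb u(1) u(1)] by simp
  have "d u \<noteq> 0"
  proof
    assume "d u = 0"
    then have "\<forall>j<n. \<phi> u j = 0" using norm by (simp add: dot_self_eq_0_iff)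
    then show False using symplectic_embedding_coeff_sum[OF emb u(1)] \<open>d u = 0\<close> by simp
  qed
  with u(2) norm dot_self_nonneg[of n "\<phi> u"] have "d u \<le> -2" by linarith
  then show ?thesis using symplectic_embedding_coeff_sum[OF emb u(1)] by simp
qed

lemma symplectic_embedding_drop_minus_two:
  assumes emb: "symplectic_embedding V E d n \<phi>" and min: "\<forall>u\<in>V. d u \<noteq> -1"
    and v: "v \<in> V" and i: "i < n" "\<phi> v i = -2"
    and col: "\<And>w. w \<in> V \<Longrightarrow> w \<noteq> v \<Longrightarrow> \<phi> w i = 0"
  defines "\<psi> \<equiv> \<phi>(v := (\<phi> v)(i := 0))"
  shows "\<And>u w. u \<in> V \<Longrightarrow> w \<in> V \<Longrightarrow> u \<noteq> w
           \<Longrightarrow> dot n (\<psi> u) (\<psi> w) = (if E u w then -1 else 0)"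
    and "(\<Sum>j<n. \<psi> v j) = - dot n (\<psi> v) (\<psi> v)"
    and "\<forall>u\<in>V. (\<Sum>j<n. \<psi> u j) \<le> 0"
proof -
  show off: "dot n (\<psi> u) (\<psi> w) = (if E u w then -1 else 0)"
    if "u \<in> V" "w \<in> V" "u \<noteq> w" for u w
    using that symplectic_embedding_dot[OF emb that(1,2)] col
    by (auto simp: \<psi>_def dot_upd_left dot_upd_right)
  have \<psi>_v: "\<psi> v = (\<phi> v)(i := 0)" by (simp add: \<psi>_def)
  have "(\<Sum>j<n. \<psi> v j) = (\<Sum>j<n. \<phi> v j) + 2"
    unfolding \<psi>_v sum_lessThan_upd[OF i(1)] using i(2) by simp
  moreover have "dot n (\<psi> v) (\<psi> v) = dot n (\<phi> v) (\<phi> v) - 4"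
    unfolding \<psi>_v dot_self_upd[OF i(1)] using i(2) by simp
  ultimately show v_sum: "(\<Sum>j<n. \<psi> v j) = - dot n (\<psi> v) (\<psi> v)"
    using symplectic_embedding_coeff_sum[OF emb v] symplectic_embedding_dot[OF emb v v] by simp
  show "\<forall>u\<in>V. (\<Sum>j<n. \<psi> u j) \<le> 0"
    using v_sum dot_self_nonneg[of n "\<psi> v"] symplectic_embedding_coeff_sum_nonpos[OF emb] min
    by (simp add: \<psi>_def)
qed

theorem theorem3p8:
  fixes V :: "'a set" and E :: "'a \<Rightarrow> 'a \<Rightarrow> bool" and d :: "'a \<Rightarrow> int"
    and \<phi> :: "'a \<Rightarrow> nat \<Rightarrow> int"
  assumes "in_S V E d"
    and "card V > 1"
    and "symplectic_embedding V E d (card V) \<phi>"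
  shows "\<not> (\<exists>i < card V. \<exists>v\<in>V. \<phi> v i = -2 \<and> (\<forall>w\<in>V. w \<noteq> v \<longrightarrow> \<phi> w i = 0))"
proof
  assume "\<exists>i < card V. \<exists>v\<in>V. \<phi> v i = -2 \<and> (\<forall>w\<in>V. w \<noteq> v \<longrightarrow> \<phi> w i = 0)"
  then obtain i v where i: "i < card V" "\<phi> v i = -2" and v: "v \<in> V"
    and col: "\<And>w. w \<in> V \<Longrightarrow> w \<noteq> v \<Longrightarrow> \<phi> w i = 0" by blast
  have min: "\<forall>u\<in>V. d u \<noteq> -1" and "is_tree V E"
    using assms(1) unfolding in_S_def minimal_tree_def symplectic_plumbing_tree_def by blast+
  then have fin: "finite V" and conn: "\<forall>a\<in>V. \<forall>b\<in>V. E\<^sup>*\<^sup>* a b"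
    and edges: "\<And>a b. E a b \<Longrightarrow> a \<in> V \<and> b \<in> V \<and> a \<noteq> b"
    unfolding is_tree_def by metis+
  define \<psi> where "\<psi> = \<phi>(v := (\<phi> v)(i := 0))"
  note \<psi> = symplectic_embedding_drop_minus_two[OF assms(3) min v i col, folded \<psi>_def]
  have "\<forall>u\<in>V. \<psi> u i = 0" using col by (simp add: \<psi>_def)
  then obtain X where X: "\<exists>u\<in>V. X u \<noteq> 0"
    and rel: "\<forall>j<card V. (\<Sum>u\<in>V. X u * \<psi> u j) = 0"
    using ex_nontrivial_relation_if_coordinate_vanishes[OF fin i(1)] by blast
  have nonpos: "\<And>u w. u \<in> V \<Longrightarrow> w \<in> V \<Longrightarrow> u \<noteq> w \<Longrightarrow> dot (card V) (\<psi> u) (\<psi> w) \<le> 0"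
    and adj: "\<And>u w. E u w \<Longrightarrow> u \<in> V \<and> w \<in> V \<and> dot (card V) (\<psi> u) (\<psi> w) < 0"
    using \<psi>(1) edges by simp_all
  have "\<exists>w\<in>V. w \<noteq> v"
    using assms(2) v card_le_Suc0_iff_eq[OF fin] by (metis One_nat_def not_le)
  then have "\<forall>u\<in>V. \<bar>X u\<bar> = 0"
    using nonneg_relation_vanishes[OF fin _ relation_abs_if_pairings_nonpos[OF fin nonpos rel]
        nonpos adj conn \<psi>(3) v \<psi>(2)] by simp
  with X show False by simp
qed

end
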